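(* Assume $\theta_i<1$ for all $i$ and $\theta_j>0$ for some $j$. Suppose $\mathcal G(C)$ is a star topology with center node $l$ and $0<\theta_l<1$. Then: (i) every equilibrium social power $x^*$ of systems (A) and (B) satisfies: (a) $x^*\in\operatorname{int}\Delta_n$; (b) for $i\in\mathcal V_f$: if $C_{li}=0$ then $x^*_i=1/n$, otherwise $x^*_i>1/n$; (c) for $i\in\mathcal V_p\setminus\{l\}$ with $C_{li}=0$: $x^*_i=\dfrac{n-\sqrt{n^2-4n\theta_i(1-\theta_i)}}{2n\theta_i}$ (in particular $x^*_i$ is the same for all equilibria), and this value is strictly decreasing in $\theta_i$. (ii) If moreover $C_{li}=0$ for all $i\in\mathcal V_p\setminus\{l\}$, then the equilibrium social power is unique and satisfies: (a) $x^*_i=\dfrac{n-\sqrt{n^2-4n\theta_i(1-\theta_i)}}{2n\theta_i}$, strictly decreasing in $\theta_i$, for $i\in\mathcal V_p\setminus\{l\}$; (b) $x^*_l=\dfrac{n-\sqrt{n^2-4n\theta_l(1-\theta_l)\xi^*}}{2n\theta_l}$; (c) $x^*_i=\dfrac1n+\Big(\dfrac{\xi^*}{n}-x^*_l\Big)C_{li}$ for $i\in\mathcal V_f$; where $\xi^*=n-r-n\sum_{j\in\mathcal V_p\setminus\{l\}}x^*_j$ and $r=|\mathcal V_f|$.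
   Context: Let $n\ge 2$, $\mathbf 1_n$ the all-ones vector, $I_n$ the identity matrix, $\Delta_n=\{x\in\mathbb R^n: x\ge 0,\ \mathbf 1_n^Tx=1\}$, $\operatorname{int}\Delta_n=\{x\in\mathbb R^n: x>0,\ \mathbf 1_n^Tx=1\}$. Let $C\in\mathbb R^{n\times n}$ be a nonnegative row-stochastic matrix with zero diagonal, and $\mathcal G(C)$ the digraph on $\{1,\dots,n\}$ with an edge $(i,j)$ iff $C_{ij}>0$. $\mathcal G(C)$ is a star topology with center node $l$ if every edge of $\mathcal G(C)$ is either from $l$ or to $l$ (i.e. $C_{ij}>0$ implies $i=l$ or $j=l$). Let $\theta=(\theta_1,\dots,\theta_n)\in[0,1]^n$, $\Theta=\mathrm{diag}(\theta)$, $W(x)=\mathrm{diag}(x)+(I_n-\mathrm{diag}(x))C$. Let $\mathcal V_f=\{i:\theta_i=0\}$ and $\mathcal V_p=\{i:\theta_i>0\}$. System (A): $x(s+1)=F(x(s))$, $x(0)\in\Delta_n$, where $F(x)=(I_n-\Theta)(I_n-W(x)^T\Theta)^{-1}\mathbf 1_n/n$; an equilibrium is $x^*\in\Delta_n$ with $F(x^* )=x^*$. System (B): $V(k+1)=\Theta W(x(k))V(k)+I_n-\Theta$, $x(k+1)=V(k+1)^T\mathbf 1_n/n$, with $V(0)=I_n$, $x(0)\in\Delta_n$; an equilibrium is a pair $(V^*,x^* )$ with $V^*$ row-stochastic, $x^*\in\Delta_n$, $V^*=\Theta W(x^* )V^*+I_n-\Theta$, $x^*=(V^* )^T\mathbf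 1_n/n$. The equilibrium social powers of (A) and (B) coincide (the fixed points of $F$). *)

theory Defs
  imports "HOL-Analysis.Analysis"
begin

definition prob_simplex :: "real^'n \<Rightarrow> bool" where
  "prob_simplex x \<longleftrightarrow> (\<forall>i. x$i \<ge> 0) \<and> (\<Sum>i\<in>UNIV. x$i) = 1"

definition int_prob_simplex :: "real^'n \<Rightarrow> bool" where
  "int_prob_simplex x \<longleftrightarrow> (\<forall>i. x$i > 0) \<and> (\<Sum>i\<in>UNIV. x$i) = 1"

definition row_stochastic :: "real^'n^'n \<Rightarrow> bool" where
  "row_stochastic A \<longleftrightarrow> (\<forall>i j. A$i$j \<ge> 0) \<and> (\<forall>i. (\<Sum>j\<in>UNIV. A$i$j) = 1)"

definition diagm :: "real^'n \<Rightarrow> real^'n^'n" where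
  "diagm v = (\<chi> i j. if i = j then v$i else 0)"

definition onesn :: "real^'n" where
  "onesn = (\<chi> i. 1)"

definition Wmat :: "real^'n^'n \<Rightarrow> real^'n \<Rightarrow> real^'n^'n" where
  "Wmat C x = diagm x + (mat 1 - diagm x) ** C"

definition Fmap :: "real^'n \<Rightarrow> real^'n^'n \<Rightarrow> real^'n \<Rightarrow> real^'n" where
  "Fmap \<theta> C x = ((mat 1 - diagm \<theta>) ** matrix_inv (mat 1 - transpose (Wmat C x) ** diagm \<theta>))
                  *v ((1 / real CARD('n)) *\<^sub>R onesn)"

definition equilibrium_A :: "real^'n \<Rightarrow> real^'n^'n \<Rightarrow> real^'n \<Rightarrow> bool" where
  "equilibrium_A \<theta> C x \<longleftrightarrow> prob_simplex x \<and> Fmap \<theta> C x = x"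

definition equilibrium_B :: "real^'n \<Rightarrow> real^'n^'n \<Rightarrow> real^'n^'n \<Rightarrow> real^'n \<Rightarrow> bool" where
  "equilibrium_B \<theta> C V x \<longleftrightarrow> row_stochastic V \<and> prob_simplex x \<and>
     V = diagm \<theta> ** Wmat C x ** V + (mat 1 - diagm \<theta>) \<and>
     x = transpose V *v ((1 / real CARD('n)) *\<^sub>R onesn)"

definition star_topology :: "real^'n^'n \<Rightarrow> 'n \<Rightarrow> bool" where
  "star_topology C l \<longleftrightarrow> (\<forall>i j. C$i$j > 0 \<longrightarrow> i = l \<or> j = l)"

definition powval :: "real \<Rightarrow> real \<Rightarrow> real \<Rightarrow> real" where
  "powval n c t = (n - sqrt (n^2 - 4 * n * t * (1 - t) * c)) / (2 * n * t)"

end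

theory Submission
  imports Defs
begin

(* With y = x / (1 - \<theta>) componentwise, F(x) = x says (I - W(x)\<^sup>T \<Theta>) y = 1/n, i.e. every agent j
   balances x j + f j = 1/n + \<Sum>i C i j * f i, where f i = \<theta> i x i (1 - x i) / (1 - \<theta> i) is the
   power flowing out of i (power_flow). In a star, a non-center agent j only receives C l j * f l:
   so x j = 1/n + C l j * f l if \<theta> j = 0, while if \<theta> j > 0 and C l j = 0 the balance
   x + f = 1/n is a quadratic equation whose root in [0, 1] is the closed form powval n 1 \<theta>.
   The center receives the outflow of all other agents; when the center listens to no partially
   stubborn agent, that outflow is \<xi>/n - 1/n, so x l is again a closed-form root.
   For row-stochastic W, I - \<Theta> W is inverse-positive; this gives the invertibility used
   throughout and the row-stochastic V of system (B). *)

definition power_flow :: "real \<Rightarrow> real \<Rightarrow> real" where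
  "power_flow t x = t * x * (1 - x) / (1 - t)"

lemma power_flow_nonneg: "0 \<le> t \<Longrightarrow> t < 1 \<Longrightarrow> 0 \<le> x \<Longrightarrow> x \<le> 1 \<Longrightarrow> 0 \<le> power_flow t x"
  by (simp add: power_flow_def)

lemma power_flow_zero [simp]: "power_flow 0 x = 0"
  by (simp add: power_flow_def)

lemma power_flow_strict_mono:
  assumes x: "0 < x" "x < 1" and ab: "0 \<le> a" "a < b" "b < 1"
  shows "power_flow a x < power_flow b x"
proof -
  have "a / (1 - a) < b / (1 - b)"
    using ab by (simp add: divide_simps) (simp add: algebra_simps)
  then have "a / (1 - a) * (x * (1 - x)) < b / (1 - b) * (x * (1 - x))"
    using x by (intro mult_strict_right_mono) auto
  then show ?thesis by (simp add: power_flow_def)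
qed

lemma add_power_flow_mono:
  assumes t: "0 \<le> t" "t < 1" and xy: "x \<le> y" "x + y \<le> 1"
  shows "x + power_flow t x \<le> y + power_flow t y"
proof -
  define s where "s = t / (1 - t)"
  have "0 \<le> s" using t by (simp add: s_def)
  have flow: "power_flow t z = s * (z * (1 - z))" for z
    by (simp add: power_flow_def s_def)
  have "(y + power_flow t y) - (x + power_flow t x) = (y - x) * (1 + s * (1 - x - y))"
    unfolding flow by (simp add: algebra_simps)
  also have "\<dots> \<ge> 0" using xy \<open>0 \<le> s\<close> by simp
  finally show ?thesis by simp
qed

lemma add_power_flow_eq: "t < 1 \<Longrightarrow> x + power_flow t x = x * (1 - t * x) / (1 - t)"
  by (simp add: power_flow_def field_simps)

lemma add_power_flow_eq_iff:
  assumes "t < 1"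
  shows "x + power_flow t x = e \<longleftrightarrow> t * x\<^sup>2 - x + (1 - t) * e = 0"
  using assms by (auto simp: add_power_flow_eq divide_eq_eq power2_eq_square algebra_simps)

lemma powval_balance:
  fixes n c t :: real
  assumes t: "0 < t" "t < 1" and n: "0 < n" and c: "0 \<le> c" "c \<le> n"
  shows "powval n c t + power_flow t (powval n c t) = c / n"
    and "0 \<le> powval n c t" and "powval n c t \<le> 1"
proof -
  define D where "D = n\<^sup>2 - 4 * n * t * (1 - t) * c"
  define s where "s = sqrt D"
  have "4 * n * t * (1 - t) * c \<le> n * n"
  proof -
    have "4 * t * (1 - t) \<le> 1"
      using zero_le_power2[of "2 * t - 1"] by (simp add: power2_eq_square algebra_simps)
    then have "4 * n * t * (1 - t) * c \<le> n * c"
      using n c mult_left_mono[of "4 * t * (1 - t)" 1 "n * c"] by (simp add: algebra_simps)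
    also have "\<dots> \<le> n * n" using n c by simp
    finally show ?thesis .
  qed
  then have D: "0 \<le> D" by (simp add: D_def power2_eq_square)
  have sn: "s \<le> n"
  proof -
    have "D \<le> n\<^sup>2" using t n c by (simp add: D_def)
    then show ?thesis using n unfolding s_def by (metis abs_of_pos real_sqrt_abs real_sqrt_le_mono)
  qed
  have s_low: "n * (1 - 2 * t) \<le> s"
  proof -
    have "(n * (1 - 2 * t))\<^sup>2 = D - 4 * n * t * (1 - t) * (n - c)"
      by (simp add: D_def power2_eq_square algebra_simps)
    also have "\<dots> \<le> D" using t n c by simp
    finally show ?thesis unfolding s_def by (rule real_le_rsqrt)
  qed
  have p: "powval n c t = (n - s) / (2 * n * t)" by (simp add: powval_def s_def D_def)
  have "t * ((n - s) / (2 * n * t))\<^sup>2 - (n - s) / (2 * n * t) + (1 - t) * (c / n)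
      = (s\<^sup>2 - D) / (4 * n\<^sup>2 * t)"
    using t n by (simp add: D_def field_simps power2_eq_square)
  also have "s\<^sup>2 = D" using D by (simp add: s_def)
  finally show "powval n c t + power_flow t (powval n c t) = c / n"
    using t p by (simp add: add_power_flow_eq_iff)
  show "0 \<le> powval n c t" using p sn t n by simp
  show "powval n c t \<le> 1" using p s_low t n by (simp add: algebra_simps)
qed

lemma eq_powval_if_balance:
  fixes n c t x :: real
  assumes t: "0 < t" "t < 1" and n: "0 < n" and c: "c < n" and x: "x \<le> 1"
    and balance: "x + power_flow t x = c / n"
  shows "x = powval n c t"
proof -
  have "t * x\<^sup>2 - x + (1 - t) * (c / n) = 0"
    using balance t by (simp add: add_power_flow_eq_iff)
  moreover have "n * (t * x\<^sup>2 - x + (1 - t) * (c / n)) = n * t * x\<^sup>2 - n * x + (1 - t) * c"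
    using n by (simp add: field_simps)
  ultimately have q: "n * t * x\<^sup>2 - n * x = - ((1 - t) * c)" by simp
  have sq: "(n - 2 * n * t * x)\<^sup>2 = n\<^sup>2 - 4 * n * t * (1 - t) * c"
  proof -
    have "(n - 2 * n * t * x)\<^sup>2 = n\<^sup>2 + 4 * n * t * (n * t * x\<^sup>2 - n * x)"
      by (simp add: power2_eq_square algebra_simps)
    then show ?thesis by (simp add: q)
  qed
  \<comment> \<open>x \<le> 1 selects the smaller root\<close>
  have "2 * t * x \<le> 1"
  proof (rule ccontr)
    assume "\<not> 2 * t * x \<le> 1"
    then have "(2 * t * x - 1)\<^sup>2 \<le> (2 * t - 1)\<^sup>2"
      using x t by (intro power_mono) (auto simp: mult_left_le)
    moreover have "n * (2 * t * x - 1)\<^sup>2 = n - 4 * t * (1 - t) * c"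
    proof -
      have "n * (2 * t * x - 1)\<^sup>2 = 4 * t * (n * t * x\<^sup>2 - n * x) + n"
        by (simp add: power2_eq_square algebra_simps)
      then show ?thesis by (simp add: q)
    qed
    ultimately have "n - 4 * t * (1 - t) * c \<le> n * (2 * t - 1)\<^sup>2"
      using n by (metis mult_left_mono less_eq_real_def)
    then have "4 * (t * (1 - t)) * (n - c) \<le> 0"
      by (simp add: power2_eq_square algebra_simps)
    moreover have "0 < 4 * (t * (1 - t)) * (n - c)" using t c by simp
    ultimately show False by simp
  qed
  then have "0 \<le> n - 2 * n * t * x"
    using n mult_left_mono[of "2 * t * x" 1 n] by (simp add: algebra_simps)
  then have "sqrt (n\<^sup>2 - 4 * n * t * (1 - t) * c) = n - 2 * n * t * x"
    by (simp flip: sq)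
  then show ?thesis using t n by (simp add: powval_def field_simps)
qed

(* If qa \<le> qb for the roots of a < b, then, as x + power_flow t x increases in t and (below 1/2)
   in x, we get 1/n = qa + power_flow a qa < qa + power_flow b qa \<le> qb + power_flow b qb = 1/n. *)
lemma powval_strict_antimono:
  fixes n a b :: real
  assumes n: "2 \<le> n" and ab: "0 < a" "a < b" "b < 1"
  shows "powval n 1 b < powval n 1 a"
proof (rule ccontr)
  define qa qb where "qa = powval n 1 a" and "qb = powval n 1 b"
  assume "\<not> ?thesis"
  then have "qa \<le> qb" by (simp add: qa_def qb_def)
  have bal_a: "qa + power_flow a qa = 1 / n" and "0 \<le> qa" "qa \<le> 1"
    using powval_balance[of a n 1] n ab unfolding qa_def by auto
  have bal_b: "qb + power_flow b qb = 1 / n" and "0 \<le> qb" "qb \<le> 1"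
    using powval_balance[of b n 1] n ab unfolding qb_def by auto
  have "qa \<le> 1 / n" "qb \<le> 1 / n"
    using bal_a bal_b power_flow_nonneg[of a qa] power_flow_nonneg[of b qb] \<open>0 \<le> qa\<close> \<open>qa \<le> 1\<close>
      \<open>0 \<le> qb\<close> \<open>qb \<le> 1\<close> ab by linarith+
  moreover have "1 / n \<le> 1 / 2" using n by simp
  ultimately have small: "qa + qb \<le> 1" "qa < 1" by linarith+
  have "qa \<noteq> 0" using bal_a n by (auto simp: power_flow_def)
  then have "1 / n < qa + power_flow b qa"
    using bal_a power_flow_strict_mono[of qa a b] \<open>0 \<le> qa\<close> small ab by simp
  also have "\<dots> \<le> qb + power_flow b qb"
    using add_power_flow_mono[of b qa qb] \<open>qa \<le> qb\<close> small ab by simp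
  finally show False using bal_b by simp
qed

lemma diagm_mult_entry [simp]: "(diagm d ** B) $ i $ j = d$i * B$i$j"
  by (simp add: diagm_def matrix_matrix_mult_def if_distrib if_distribR cong: if_cong)

lemma mult_diagm_entry [simp]: "(B ** diagm d) $ i $ j = B$i$j * d$j"
  by (simp add: diagm_def matrix_matrix_mult_def if_distrib if_distribR cong: if_cong)

lemma diagm_mult_vec [simp]: "(diagm d *v v) $ i = d$i * v$i"
  by (simp add: diagm_def matrix_vector_mult_def if_distrib if_distribR cong: if_cong)

lemma transpose_diagm [simp]: "transpose (diagm d) = diagm d"
  by (simp add: diagm_def transpose_def vec_eq_iff)

lemma matrix_diff_mult: "(A - B) ** (C :: 'a::ring_1^'n^'m) = A ** C - B ** C"
  by (simp add: matrix_matrix_mult_def vec_eq_iff sum_subtractf left_diff_distrib)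

lemma transpose_diff: "transpose (A - B) = transpose A - transpose B"
  by (simp add: transpose_def vec_eq_iff)

lemma matrix_inv_left: "invertible (A :: 'a::semiring_1^'n^'n) \<Longrightarrow> matrix_inv A ** A = mat 1"
  unfolding invertible_def matrix_inv_def by (rule someI2_ex) auto

lemma matrix_inv_right: "invertible (A :: 'a::semiring_1^'n^'n) \<Longrightarrow> A ** matrix_inv A = mat 1"
  unfolding invertible_def matrix_inv_def by (rule someI2_ex) auto

lemma transpose_eq_mult_matrix_inv:
  fixes A :: "real^'n^'n"
  assumes "invertible A" and "A ** V = B"
  shows "transpose V = transpose B ** matrix_inv (transpose A)"
proof -
  have "transpose V ** transpose A = transpose B"
    using assms(2) by (metis matrix_transpose_mul)
  then have "transpose V ** transpose A ** matrix_inv (transpose A) = transpose B ** matrix_inv (transpose A)"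
    by simp
  then show ?thesis
    using matrix_inv_right[OF transpose_invertible[OF assms(1)]] by (simp flip: matrix_mul_assoc)
qed

lemma I_minus_diagm_mult_vec:
  "((mat 1 - diagm d ** W) *v v) $ i = v$i - d$i * (\<Sum>k\<in>UNIV. W$i$k * v$k)"
  by (simp add: matrix_vector_mult_diff_rdistrib flip: matrix_vector_mul_assoc)
     (simp add: matrix_vector_mult_def)

(* I - \<Theta> W is inverse-positive: at a minimal entry v i, the average of v over row i of W
   is at least v i, so 0 \<le> ((I - \<Theta> W) v) i \<le> (1 - \<theta> i) v i. *)
lemma nonneg_if_I_minus_diagm_stochastic_mult_nonneg:
  assumes W: "row_stochastic W" and \<theta>: "\<forall>i. 0 \<le> \<theta>$i \<and> \<theta>$i < 1"
    and nonneg: "\<forall>i. 0 \<le> ((mat 1 - diagm \<theta> ** W) *v v) $ i"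
  shows "0 \<le> v$k"
proof -
  have "Min (range (\<lambda>k. v$k)) \<in> range (\<lambda>k. v$k)" by (rule Min_in) auto
  then obtain i where "v$i = Min (range (\<lambda>k. v$k))" by (metis rangeE)
  then have min: "v$i \<le> v$k" for k by simp
  have "v$i = (\<Sum>k\<in>UNIV. W$i$k * v$i)"
    using W by (simp add: row_stochastic_def flip: sum_distrib_right)
  also have "\<dots> \<le> (\<Sum>k\<in>UNIV. W$i$k * v$k)"
    using W min by (intro sum_mono mult_left_mono) (auto simp: row_stochastic_def)
  finally have "\<theta>$i * v$i \<le> \<theta>$i * (\<Sum>k\<in>UNIV. W$i$k * v$k)"
    using \<theta> by (simp add: mult_left_mono)
  moreover have "0 \<le> v$i - \<theta>$i * (\<Sum>k\<in>UNIV. W$i$k * v$k)"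
    using nonneg by (simp only: I_minus_diagm_mult_vec)
  ultimately have "0 \<le> (1 - \<theta>$i) * v$i" by (simp add: algebra_simps)
  then have "0 \<le> v$i" using \<theta>[rule_format, of i] by (simp add: zero_le_mult_iff)
  then show ?thesis using min[of k] by simp
qed

lemma I_minus_diagm_stochastic_invertible:
  assumes W: "row_stochastic W" and \<theta>: "\<forall>i. 0 \<le> \<theta>$i \<and> \<theta>$i < 1"
  shows "invertible (mat 1 - diagm \<theta> ** W)"
proof -
  have "v = 0" if Av: "(mat 1 - diagm \<theta> ** W) *v v = 0" for v
  proof -
    have "(mat 1 - diagm \<theta> ** W) *v (- v) = 0"
      using Av by (simp add: vec_eq_iff matrix_vector_mult_def sum_negf)
    then have "0 \<le> v$k" "0 \<le> (- v)$k" for k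
      using Av nonneg_if_I_minus_diagm_stochastic_mult_nonneg[OF W \<theta>, of v]
        nonneg_if_I_minus_diagm_stochastic_mult_nonneg[OF W \<theta>, of "- v"] by simp_all
    then show ?thesis by (simp add: vec_eq_iff order_antisym)
  qed
  then show ?thesis using matrix_left_invertible_ker invertible_left_inverse by blast
qed

lemma Wmat_entry: "Wmat C x $ i $ j = (if i = j then x$i else 0) + (1 - x$i) * C$i$j"
proof -
  have "diagm x $ i $ j = (if i = j then x$i else 0)" by (simp add: diagm_def)
  then show ?thesis by (simp add: Wmat_def matrix_diff_mult algebra_simps)
qed

lemma row_stochastic_Wmat:
  assumes C: "row_stochastic C" and x: "\<forall>i. 0 \<le> x$i \<and> x$i \<le> 1"
  shows "row_stochastic (Wmat C x)"
proof -
  have "(\<Sum>j\<in>UNIV. Wmat C x $ i $ j) = x$i + (1 - x$i) * (\<Sum>j\<in>UNIV. C$i$j)" for i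
    by (simp add: Wmat_entry sum.distrib sum_distrib_left)
  then show ?thesis using C x by (simp add: row_stochastic_def Wmat_entry)
qed

lemma prob_simplex_le_one:
  assumes "prob_simplex x" shows "x$i \<le> 1"
proof -
  have "x$i \<le> (\<Sum>k\<in>UNIV. x$k)" using assms by (intro member_le_sum) (auto simp: prob_simplex_def)
  then show ?thesis using assms by (simp add: prob_simplex_def)
qed

definition power_balance :: "real^'n \<Rightarrow> real^'n^'n \<Rightarrow> real^'n \<Rightarrow> bool" where
  "power_balance \<theta> C x \<longleftrightarrow> (\<forall>j. x$j + power_flow (\<theta>$j) (x$j)
     = 1 / real CARD('n) + (\<Sum>i\<in>UNIV. C$i$j * power_flow (\<theta>$i) (x$i)))"

lemma I_minus_transpose_Wmat_mult_vec:
  "((mat 1 - transpose (Wmat C x) ** diagm d) *v y) $ j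
     = y$j - d$j * x$j * y$j - (\<Sum>i\<in>UNIV. C$i$j * ((1 - x$i) * d$i * y$i))"
proof -
  have "((mat 1 - transpose (Wmat C x) ** diagm d) *v y) $ j
      = y$j - ((transpose (Wmat C x) ** diagm d) *v y) $ j"
    by (simp add: matrix_vector_mult_diff_rdistrib)
  also have "((transpose (Wmat C x) ** diagm d) *v y) $ j
      = (\<Sum>i\<in>UNIV. ((if i = j then x$i else 0) + (1 - x$i) * C$i$j) * d$i * y$i)"
    by (simp add: matrix_vector_mult_def transpose_def Wmat_entry mult.assoc)
  also have "\<dots> = (\<Sum>i\<in>UNIV. if i = j then x$i * d$i * y$i else 0)
                   + (\<Sum>i\<in>UNIV. C$i$j * ((1 - x$i) * d$i * y$i))"
    unfolding sum.distrib[symmetric] by (rule sum.cong) (auto simp: algebra_simps)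
  finally show ?thesis by (simp add: algebra_simps)
qed

lemma Fmap_eq_iff_power_balance:
  fixes C :: "real^'n^'n"
  assumes C: "row_stochastic C" and \<theta>: "\<forall>i. 0 \<le> \<theta>$i \<and> \<theta>$i < 1"
    and x: "\<forall>i. 0 \<le> x$i \<and> x$i \<le> 1"
  shows "Fmap \<theta> C x = x \<longleftrightarrow> power_balance \<theta> C x"
proof -
  define M where "M = mat 1 - transpose (Wmat C x) ** diagm \<theta>"
  define c :: "real^'n" where "c = (1 / real CARD('n)) *\<^sub>R onesn"
  define y where "y = (\<chi> j. x$j / (1 - \<theta>$j))"
  have "M = transpose (mat 1 - diagm \<theta> ** Wmat C x)"
    by (simp add: M_def transpose_diff matrix_transpose_mul)
  then have M: "invertible M"
    using I_minus_diagm_stochastic_invertible[OF row_stochastic_Wmat[OF C x] \<theta>]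
    by (simp add: transpose_invertible)
  have scale: "(mat 1 - diagm \<theta>) *v z = x \<longleftrightarrow> z = y" for z
  proof -
    have "((mat 1 - diagm \<theta>) *v z) $ j = (1 - \<theta>$j) * z$j" for j
      by (simp add: matrix_vector_mult_diff_rdistrib algebra_simps)
    moreover have "(1 - \<theta>$j) * z$j = x$j \<longleftrightarrow> z$j = y$j" for j
      using \<theta>[rule_format, of j] by (auto simp: y_def field_simps)
    ultimately show ?thesis by (simp add: vec_eq_iff)
  qed
  have "Fmap \<theta> C x = (mat 1 - diagm \<theta>) *v (matrix_inv M *v c)"
    by (simp add: Fmap_def M_def c_def matrix_vector_mul_assoc)
  then have "Fmap \<theta> C x = x \<longleftrightarrow> matrix_inv M *v c = y" by (simp add: scale)
  also have "\<dots> \<longleftrightarrow> M *v y = c"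
    using matrix_inv_left[OF M] matrix_inv_right[OF M]
    by (metis matrix_vector_mul_assoc matrix_vector_mul_lid)
  also have "\<dots> \<longleftrightarrow> power_balance \<theta> C x"
  proof -
    have flow: "(1 - x$i) * \<theta>$i * y$i = power_flow (\<theta>$i) (x$i)" for i
      by (simp add: y_def power_flow_def)
    have self: "y$j - \<theta>$j * x$j * y$j = x$j + power_flow (\<theta>$j) (x$j)" for j
      using \<theta> by (simp add: y_def add_power_flow_eq algebra_simps flip: add_divide_distrib)
    have "(M *v y) $ j = x$j + power_flow (\<theta>$j) (x$j) - (\<Sum>i\<in>UNIV. C$i$j * power_flow (\<theta>$i) (x$i))"
      for j by (simp add: M_def I_minus_transpose_Wmat_mult_vec flow flip: self)
    then show ?thesis by (auto simp: power_balance_def vec_eq_iff c_def onesn_def algebra_simps)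
  qed
  finally show ?thesis .
qed

(* Summing the balance equations, the inflows add up to the total outflow, since C is row-stochastic. *)
lemma power_balance_sum:
  fixes C :: "real^'n^'n"
  assumes C: "row_stochastic C" and "power_balance \<theta> C x"
  shows "(\<Sum>j\<in>UNIV. x$j) = 1"
proof -
  define f where "f i = power_flow (\<theta>$i) (x$i)" for i
  have "(\<Sum>j\<in>UNIV. x$j) + (\<Sum>j\<in>UNIV. f j) = (\<Sum>j\<in>UNIV. 1 / real CARD('n) + (\<Sum>i\<in>UNIV. C$i$j * f i))"
    using assms(2) by (simp add: power_balance_def f_def flip: sum.distrib)
  also have "\<dots> = 1 + (\<Sum>i\<in>UNIV. f i * (\<Sum>j\<in>UNIV. C$i$j))"
  proof -
    have "(\<Sum>j\<in>UNIV. \<Sum>i\<in>UNIV. C$i$j * f i) = (\<Sum>i\<in>UNIV. f i * (\<Sum>j\<in>UNIV. C$i$j))"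
      by (subst sum.swap) (simp add: sum_distrib_left mult.commute)
    then show ?thesis by (simp add: sum.distrib)
  qed
  also have "\<dots> = 1 + (\<Sum>i\<in>UNIV. f i)"
    using C by (simp add: row_stochastic_def)
  finally show ?thesis by simp
qed

lemma equilibrium_A_iff_power_balance:
  fixes C :: "real^'n^'n"
  assumes C: "row_stochastic C" and \<theta>: "\<forall>i. 0 \<le> \<theta>$i \<and> \<theta>$i < 1"
  shows "equilibrium_A \<theta> C x \<longleftrightarrow> (\<forall>i. 0 \<le> x$i) \<and> power_balance \<theta> C x"
proof
  assume eq: "equilibrium_A \<theta> C x"
  then have "prob_simplex x" "Fmap \<theta> C x = x" by (simp_all add: equilibrium_A_def)
  then show "(\<forall>i. 0 \<le> x$i) \<and> power_balance \<theta> C x"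
    using Fmap_eq_iff_power_balance[OF C \<theta>] prob_simplex_le_one by (auto simp: prob_simplex_def)
next
  assume x: "(\<forall>i. 0 \<le> x$i) \<and> power_balance \<theta> C x"
  moreover have "(\<Sum>i\<in>UNIV. x$i) = 1" using power_balance_sum[OF C] x by blast
  ultimately have "prob_simplex x" by (simp add: prob_simplex_def)
  then show "equilibrium_A \<theta> C x"
    using x Fmap_eq_iff_power_balance[OF C \<theta>] prob_simplex_le_one by (auto simp: equilibrium_A_def)
qed

lemma fixed_point_iff_I_minus_mult:
  fixes D W V :: "real^'n^'n"
  shows "V = D ** W ** V + (mat 1 - D) \<longleftrightarrow> (mat 1 - D ** W) ** V = mat 1 - D"
proof -
  have "(mat 1 - D ** W) ** V = V - D ** W ** V"
    by (simp add: matrix_diff_mult matrix_mul_assoc)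
  then show ?thesis by (auto simp: diff_eq_eq add.commute)
qed

lemma Fmap_eq_transpose_mult:
  fixes C :: "real^'n^'n"
  assumes C: "row_stochastic C" and \<theta>: "\<forall>i. 0 \<le> \<theta>$i \<and> \<theta>$i < 1"
    and x: "\<forall>i. 0 \<le> x$i \<and> x$i \<le> 1"
    and V: "(mat 1 - diagm \<theta> ** Wmat C x) ** V = mat 1 - diagm \<theta>"
  shows "Fmap \<theta> C x = transpose V *v ((1 / real CARD('n)) *\<^sub>R onesn)"
proof -
  have "transpose V = (mat 1 - diagm \<theta>) ** matrix_inv (mat 1 - transpose (Wmat C x) ** diagm \<theta>)"
    using transpose_eq_mult_matrix_inv[OF I_minus_diagm_stochastic_invertible[OF row_stochastic_Wmat[OF C x] \<theta>] V]
    by (simp add: transpose_diff matrix_transpose_mul)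
  then show ?thesis by (simp only: Fmap_def)
qed

lemma row_stochastic_I_minus_diagm_solution:
  assumes W: "row_stochastic W" and \<theta>: "\<forall>i. 0 \<le> \<theta>$i \<and> \<theta>$i < 1"
    and V: "(mat 1 - diagm \<theta> ** W) ** V = mat 1 - diagm \<theta>"
  shows "row_stochastic V"
proof -
  let ?A = "mat 1 - diagm \<theta> ** W"
  have "0 \<le> V$i$j" for i j
  proof -
    have "(?A *v (\<chi> k. V$k$j)) $ k = (?A ** V) $ k $ j" for k
      by (simp only: matrix_vector_mult_def matrix_matrix_mult_def vec_lambda_beta)
    then have "(?A *v (\<chi> k. V$k$j)) $ k = (mat 1 - diagm \<theta>) $ k $ j" for k
      by (simp only: V)
    then have "0 \<le> (?A *v (\<chi> k. V$k$j)) $ k" for k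
      using \<theta> by (simp add: diagm_def mat_def less_imp_le)
    then show ?thesis using nonneg_if_I_minus_diagm_stochastic_mult_nonneg[OF W \<theta>, of "\<chi> k. V$k$j" i] by simp
  qed
  moreover have "V *v onesn = onesn"
  proof -
    have "W *v onesn = onesn" using W by (simp add: row_stochastic_def vec_eq_iff matrix_vector_mult_def onesn_def)
    have "?A *v (V *v onesn) = (mat 1 - diagm \<theta>) *v onesn"
      by (simp only: matrix_vector_mul_assoc V)
    also have "\<dots> = ?A *v onesn"
      using \<open>W *v onesn = onesn\<close>
      by (simp add: matrix_vector_mult_diff_rdistrib flip: matrix_vector_mul_assoc)
    finally have "?A *v (V *v onesn) = ?A *v onesn" .
    then show ?thesis
      using matrix_inv_left[OF I_minus_diagm_stochastic_invertible[OF W \<theta>]]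
      by (metis matrix_vector_mul_assoc matrix_vector_mul_lid)
  qed
  then have "(\<Sum>j\<in>UNIV. V$i$j) = 1" for i
    by (simp add: vec_eq_iff matrix_vector_mult_def onesn_def)
  ultimately show ?thesis by (simp add: row_stochastic_def)
qed

lemma equilibrium_B_imp_A:
  fixes C :: "real^'n^'n"
  assumes C: "row_stochastic C" and \<theta>: "\<forall>i. 0 \<le> \<theta>$i \<and> \<theta>$i < 1"
    and eq: "equilibrium_B \<theta> C V x"
  shows "equilibrium_A \<theta> C x"
proof -
  have p: "prob_simplex x" using eq unfolding equilibrium_B_def by blast
  then have x: "\<forall>i. 0 \<le> x$i \<and> x$i \<le> 1" by (simp add: prob_simplex_def prob_simplex_le_one)
  have "(mat 1 - diagm \<theta> ** Wmat C x) ** V = mat 1 - diagm \<theta>"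
    using eq unfolding equilibrium_B_def fixed_point_iff_I_minus_mult by blast
  then have "Fmap \<theta> C x = transpose V *v ((1 / real CARD('n)) *\<^sub>R onesn)"
    by (rule Fmap_eq_transpose_mult[OF C \<theta> x])
  also have "\<dots> = x" using eq by (simp only: equilibrium_B_def)
  finally have "Fmap \<theta> C x = x" .
  with p show ?thesis by (simp add: equilibrium_A_def)
qed

lemma equilibrium_A_imp_B:
  fixes C :: "real^'n^'n"
  assumes C: "row_stochastic C" and \<theta>: "\<forall>i. 0 \<le> \<theta>$i \<and> \<theta>$i < 1"
    and eq: "equilibrium_A \<theta> C x"
  shows "\<exists>V. equilibrium_B \<theta> C V x"
proof -
  have p: "prob_simplex x" "Fmap \<theta> C x = x" using eq by (simp_all add: equilibrium_A_def)
  then have x: "\<forall>i. 0 \<le> x$i \<and> x$i \<le> 1" by (simp add: prob_simplex_def prob_simplex_le_one)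
  have W: "row_stochastic (Wmat C x)" using row_stochastic_Wmat[OF C x] .
  define V where "V = matrix_inv (mat 1 - diagm \<theta> ** Wmat C x) ** (mat 1 - diagm \<theta>)"
  have AV: "(mat 1 - diagm \<theta> ** Wmat C x) ** V = mat 1 - diagm \<theta>"
    using matrix_inv_right[OF I_minus_diagm_stochastic_invertible[OF W \<theta>]]
    by (simp add: V_def matrix_mul_assoc)
  have "x = transpose V *v ((1 / real CARD('n)) *\<^sub>R onesn)"
    using p(2) Fmap_eq_transpose_mult[OF C \<theta> x AV] by (simp only:)
  then have "equilibrium_B \<theta> C V x"
    using p(1) AV row_stochastic_I_minus_diagm_solution[OF W \<theta> AV]
    unfolding equilibrium_B_def fixed_point_iff_I_minus_mult by blast
  then show ?thesis ..
qed

lemma equilibrium_A_pos: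
  fixes C :: "real^'n^'n"
  assumes C: "row_stochastic C" and \<theta>: "\<forall>i. 0 \<le> \<theta>$i \<and> \<theta>$i < 1"
    and eq: "equilibrium_A \<theta> C x"
  shows "0 < x$j"
proof (rule ccontr)
  assume "\<not> 0 < x$j"
  have x: "\<forall>i. 0 \<le> x$i \<and> x$i \<le> 1" and bal: "power_balance \<theta> C x"
    using eq equilibrium_A_iff_power_balance[OF C \<theta>] prob_simplex_le_one
    by (auto simp: equilibrium_A_def)
  then have "x$j = 0" using \<open>\<not> 0 < x$j\<close> by (meson order.antisym not_less)
  have "0 \<le> (\<Sum>i\<in>UNIV. C$i$j * power_flow (\<theta>$i) (x$i))"
    using C \<theta> x by (intro sum_nonneg mult_nonneg_nonneg power_flow_nonneg) (auto simp: row_stochastic_def)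
  then have "0 < x$j + power_flow (\<theta>$j) (x$j)"
    using bal by (simp add: power_balance_def add_pos_nonneg)
  then show False using \<open>x$j = 0\<close> by (simp add: power_flow_def)
qed

lemma equilibrium_A_int_prob_simplex:
  fixes C :: "real^'n^'n"
  assumes C: "row_stochastic C" and \<theta>: "\<forall>i. 0 \<le> \<theta>$i \<and> \<theta>$i < 1"
    and eq: "equilibrium_A \<theta> C x"
  shows "int_prob_simplex x"
  using equilibrium_A_pos[OF assms] eq by (simp add: equilibrium_A_def prob_simplex_def int_prob_simplex_def)

lemma int_prob_simplex_less_one:
  assumes "CARD('n) \<ge> 2" and x: "int_prob_simplex (x :: real^'n)"
  shows "x$i < 1"
proof -
  have "UNIV \<noteq> {i}"
  proof
    assume "UNIV = {i}"
    then have "CARD('n) = card {i}" by (simp only:)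
    then show False using assms(1) by simp
  qed
  then obtain k where "k \<noteq> i" by blast
  then have "x$i + x$k = (\<Sum>j\<in>{i, k}. x$j)" by simp
  also have "\<dots> \<le> (\<Sum>j\<in>UNIV. x$j)" using x by (intro sum_mono2) (auto simp: int_prob_simplex_def less_imp_le)
  also have "\<dots> = 1" using x by (simp add: int_prob_simplex_def)
  moreover have "0 < x$k" using x by (simp add: int_prob_simplex_def)
  ultimately show ?thesis by linarith
qed

locale star_network =
  fixes \<theta> :: "real^'n" and C :: "real^'n^'n" and l :: 'n
  assumes card_ge_2: "CARD('n) \<ge> 2"
    and stochastic: "row_stochastic C"
    and zero_diag: "\<forall>i. C$i$i = 0"
    and \<theta>_range: "\<forall>i. 0 \<le> \<theta>$i \<and> \<theta>$i < 1"
    and star: "star_topology C l"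
    and center_pos: "0 < \<theta>$l"
begin

(* \<theta> i = 0 makes row i of V equal to e i: agent i is fully stubborn; \<theta> i > 0 partially stubborn. *)
abbreviation "Vf \<equiv> {i. \<theta>$i = 0}"
abbreviation "Vp \<equiv> {i. 0 < \<theta>$i}"

definition xi :: "real^'n \<Rightarrow> real" where
  "xi x = real CARD('n) - real (card Vf) - real CARD('n) * (\<Sum>j\<in>Vp - {l}. x$j)"

lemma C_nonneg: "0 \<le> C$i$j"
  using stochastic by (simp add: row_stochastic_def)

lemma noncenter_row: "i \<noteq> l \<Longrightarrow> C$i$j = (if j = l then 1 else 0)"
proof -
  assume "i \<noteq> l"
  then have zero: "C$i$k = 0" if "k \<noteq> l" for k
    using star that C_nonneg[of i k] by (force simp: star_topology_def)
  then have "(\<Sum>k\<in>UNIV. C$i$k) = C$i$l"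
    by (simp add: sum.remove[of UNIV l])
  then have "C$i$l = 1" using stochastic by (simp add: row_stochastic_def)
  then show ?thesis using zero by simp
qed

lemma inflow_star:
  "(\<Sum>i\<in>UNIV. C$i$j * f i) = (if j = l then (\<Sum>i\<in>UNIV - {l}. f i) else C$l$j * f l)"
proof -
  have "(\<Sum>i\<in>UNIV. C$i$j * f i) = C$l$j * f l + (\<Sum>i\<in>UNIV - {l}. C$i$j * f i)"
    by (simp add: sum.remove[of UNIV l])
  also have "(\<Sum>i\<in>UNIV - {l}. C$i$j * f i) = (\<Sum>i\<in>UNIV - {l}. if j = l then f i else 0)"
    by (intro sum.cong) (auto simp: noncenter_row)
  finally show ?thesis using zero_diag by auto
qed

lemma power_balance_star_iff:
  "power_balance \<theta> C x \<longleftrightarrow>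
     x$l + power_flow (\<theta>$l) (x$l) = 1 / real CARD('n) + (\<Sum>i\<in>UNIV - {l}. power_flow (\<theta>$i) (x$i))
   \<and> (\<forall>j. j \<noteq> l \<longrightarrow> x$j + power_flow (\<theta>$j) (x$j)
          = 1 / real CARD('n) + C$l$j * power_flow (\<theta>$l) (x$l))"
  unfolding power_balance_def inflow_star by auto

lemma center_flow_pos:
  assumes "equilibrium_A \<theta> C x" shows "0 < power_flow (\<theta>$l) (x$l)"
proof -
  have "int_prob_simplex x" using equilibrium_A_int_prob_simplex[OF stochastic \<theta>_range assms] .
  then have "0 < x$l" "x$l < 1"
    using int_prob_simplex_less_one card_ge_2 by (auto simp: int_prob_simplex_def)
  then show ?thesis using center_pos \<theta>_range by (simp add: power_flow_def)
qed

lemma equilibrium_balance: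
  assumes "equilibrium_A \<theta> C x"
  shows "x$l + power_flow (\<theta>$l) (x$l) = 1 / real CARD('n) + (\<Sum>i\<in>UNIV - {l}. power_flow (\<theta>$i) (x$i))"
    and "j \<noteq> l \<Longrightarrow> x$j + power_flow (\<theta>$j) (x$j) = 1 / real CARD('n) + C$l$j * power_flow (\<theta>$l) (x$l)"
  using assms by (simp_all add: equilibrium_A_iff_power_balance[OF stochastic \<theta>_range] power_balance_star_iff)

lemma equilibrium_fully_stubborn:
  assumes "equilibrium_A \<theta> C x" and "\<theta>$i = 0"
  shows "x$i = 1 / real CARD('n) + C$l$i * power_flow (\<theta>$l) (x$l)"
proof -
  have "i \<noteq> l" using assms(2) center_pos by auto
  then show ?thesis using equilibrium_balance(2)[OF assms(1) \<open>i \<noteq> l\<close>] assms(2) by simp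
qed

lemma equilibrium_unlinked_partially_stubborn:
  assumes eq: "equilibrium_A \<theta> C x" and i: "0 < \<theta>$i" "i \<noteq> l" "C$l$i = 0"
  shows "x$i = powval (real CARD('n)) 1 (\<theta>$i)"
proof (rule eq_powval_if_balance)
  show "x$i + power_flow (\<theta>$i) (x$i) = 1 / real CARD('n)"
    using equilibrium_balance(2)[OF eq] i by simp
  show "x$i \<le> 1" using eq by (simp add: equilibrium_A_def prob_simplex_le_one)
qed (use i \<theta>_range card_ge_2 in auto)

lemma equilibrium_properties:
  assumes eq: "equilibrium_A \<theta> C x"
  shows "int_prob_simplex x
    \<and> (\<forall>i\<in>Vf. (C$l$i = 0 \<longrightarrow> x$i = 1 / real CARD('n)) \<and> (C$l$i \<noteq> 0 \<longrightarrow> x$i > 1 / real CARD('n)))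
    \<and> (\<forall>i\<in>Vp - {l}. C$l$i = 0 \<longrightarrow> x$i = powval (real CARD('n)) 1 (\<theta>$i))"
proof -
  have "0 < C$l$i * power_flow (\<theta>$l) (x$l)" if "C$l$i \<noteq> 0" for i
    using that C_nonneg[of l i] center_flow_pos[OF eq] by simp
  then show ?thesis
    using equilibrium_A_int_prob_simplex[OF stochastic \<theta>_range eq] equilibrium_fully_stubborn[OF eq]
      equilibrium_unlinked_partially_stubborn[OF eq] by auto
qed

lemma card_fully_stubborn_pos:
  assumes unlinked: "\<forall>i\<in>Vp - {l}. C$l$i = 0"
  shows "1 \<le> card Vf"
proof -
  have "C$l$i = 0" if "i \<notin> Vf" for i
    using that unlinked zero_diag \<theta>_range by (cases "i = l") (auto simp: order.order_iff_strict)
  then have "(\<Sum>i\<in>UNIV. C$l$i) = (\<Sum>i\<in>Vf. C$l$i)"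
    by (intro sum.mono_neutral_right) auto
  then have "(\<Sum>i\<in>Vf. C$l$i) = 1" using stochastic by (simp add: row_stochastic_def)
  then have "Vf \<noteq> {}" by (metis sum.empty zero_neq_one)
  then show ?thesis by (simp add: Suc_le_eq card_gt_0_iff)
qed

lemma card_fully_partially_stubborn: "card Vf + card Vp = CARD('n)"
proof -
  have "Vf = UNIV - Vp" using \<theta>_range by (auto simp: order.order_iff_strict)
  then show ?thesis by (simp add: card_Diff_subset card_mono)
qed

lemma card_partially_stubborn_noncenter: "real (card (Vp - {l})) = real (card Vp) - 1"
proof -
  have "1 \<le> card Vp" using center_pos by (auto simp: Suc_le_eq card_gt_0_iff)
  then show ?thesis using center_pos by (simp add: card_Diff_singleton of_nat_diff)
qed

lemma noncenter_flow_sum: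
  assumes bal: "\<forall>i\<in>Vp - {l}. x$i + power_flow (\<theta>$i) (x$i) = 1 / real CARD('n)"
  shows "1 / real CARD('n) + (\<Sum>i\<in>UNIV - {l}. power_flow (\<theta>$i) (x$i)) = xi x / real CARD('n)"
proof -
  have "(\<Sum>i\<in>UNIV - {l}. power_flow (\<theta>$i) (x$i)) = (\<Sum>i\<in>Vp - {l}. power_flow (\<theta>$i) (x$i))"
    using \<theta>_range by (intro sum.mono_neutral_right) (auto simp: order.order_iff_strict)
  also have "\<dots> = (\<Sum>i\<in>Vp - {l}. 1 / real CARD('n) - x$i)"
    using bal by (intro sum.cong) (auto simp: algebra_simps)
  also have "\<dots> = (real (card Vp) - 1) / real CARD('n) - (\<Sum>i\<in>Vp - {l}. x$i)"
    by (simp add: sum_subtractf card_partially_stubborn_noncenter diff_divide_distrib)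
  finally show ?thesis
    using card_fully_partially_stubborn card_ge_2
    by (simp add: xi_def field_simps flip: of_nat_add)
qed

context
  assumes unlinked: "\<forall>i\<in>Vp - {l}. C$l$i = 0"
begin

lemma xi_less:
  assumes "\<forall>i\<in>Vp - {l}. 0 \<le> x$i"
  shows "xi x < real CARD('n)"
proof -
  have "0 \<le> real CARD('n) * (\<Sum>j\<in>Vp - {l}. x$j)" using assms by (intro mult_nonneg_nonneg sum_nonneg) auto
  then show ?thesis using card_fully_stubborn_pos[OF unlinked] by (simp add: xi_def)
qed

lemma equilibrium_partially_stubborn_balance:
  assumes "equilibrium_A \<theta> C x"
  shows "\<forall>i\<in>Vp - {l}. x$i + power_flow (\<theta>$i) (x$i) = 1 / real CARD('n)"
  using equilibrium_balance(2)[OF assms] unlinked by simp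

lemma equilibrium_center_balance:
  assumes "equilibrium_A \<theta> C x"
  shows "x$l + power_flow (\<theta>$l) (x$l) = xi x / real CARD('n)"
  using equilibrium_balance(1)[OF assms] noncenter_flow_sum[OF equilibrium_partially_stubborn_balance[OF assms]]
  by simp

lemma equilibrium_center:
  assumes eq: "equilibrium_A \<theta> C x"
  shows "x$l = powval (real CARD('n)) (xi x) (\<theta>$l)"
proof (rule eq_powval_if_balance)
  have "\<forall>i. 0 \<le> x$i \<and> x$i \<le> 1" using eq by (simp add: equilibrium_A_def prob_simplex_def prob_simplex_le_one)
  then show "xi x < real CARD('n)" "x$l \<le> 1" using xi_less by auto
qed (use equilibrium_center_balance[OF eq] center_pos \<theta>_range card_ge_2 in auto)

lemma equilibrium_fully_stubborn_xi:
  assumes eq: "equilibrium_A \<theta> C x" and "\<theta>$i = 0"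
  shows "x$i = 1 / real CARD('n) + (xi x / real CARD('n) - x$l) * C$l$i"
proof -
  have "power_flow (\<theta>$l) (x$l) = xi x / real CARD('n) - x$l"
    using equilibrium_center_balance[OF eq] by simp
  then show ?thesis using equilibrium_fully_stubborn[OF assms] by (simp add: mult.commute)
qed

lemma equilibrium_unique:
  assumes x: "equilibrium_A \<theta> C x" and y: "equilibrium_A \<theta> C y"
  shows "x = y"
proof -
  have partial: "x$i = y$i" if "i \<in> Vp - {l}" for i
    using equilibrium_unlinked_partially_stubborn[OF x] equilibrium_unlinked_partially_stubborn[OF y] that unlinked by auto
  then have "xi x = xi y" unfolding xi_def by (metis (no_types, lifting) sum.cong)
  then have center: "x$l = y$l" using equilibrium_center[OF x] equilibrium_center[OF y] by simp
  have "x$i = y$i" for i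
  proof (cases "\<theta>$i = 0")
    case True
    then show ?thesis using equilibrium_fully_stubborn_xi[OF x] equilibrium_fully_stubborn_xi[OF y] \<open>xi x = xi y\<close> center
      by simp
  next
    case False
    then show ?thesis using partial center \<theta>_range by (cases "i = l") (auto simp: order.order_iff_strict)
  qed
  then show ?thesis by (simp add: vec_eq_iff)
qed

lemma equilibrium_exists: "\<exists>x. equilibrium_A \<theta> C x"
proof -
  define N where "N = real CARD('n)"
  have N: "2 \<le> N" using card_ge_2 by (simp add: N_def)
  define P where "P i = powval N 1 (\<theta>$i)" for i
  have P: "P i + power_flow (\<theta>$i) (P i) = 1 / N" "0 \<le> P i" "P i \<le> 1 / N" if "0 < \<theta>$i" for i
  proof -
    have "P i + power_flow (\<theta>$i) (P i) = 1 / N" "0 \<le> P i" "P i \<le> 1"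
      using powval_balance[of "\<theta>$i" N 1] that \<theta>_range N by (auto simp: P_def)
    moreover have "0 \<le> power_flow (\<theta>$i) (P i)"
      using calculation that \<theta>_range by (intro power_flow_nonneg) auto
    ultimately show "P i + power_flow (\<theta>$i) (P i) = 1 / N" "0 \<le> P i" "P i \<le> 1 / N" by auto
  qed
  define \<xi> where "\<xi> = N - real (card Vf) - N * (\<Sum>i\<in>Vp - {l}. P i)"
  define X where "X = powval N \<xi> (\<theta>$l)"
  define x where "x = (\<chi> i. if i = l then X else if 0 < \<theta>$i then P i
                            else 1 / N + C$l$i * power_flow (\<theta>$l) X)"
  have x_partial: "x$i = P i" if "i \<in> Vp - {l}" for i using that by (simp add: x_def)
  have xi: "xi x = \<xi>" unfolding xi_def \<xi>_def N_def by (simp add: x_partial)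
  have "N * (\<Sum>i\<in>Vp - {l}. P i) \<le> N * (\<Sum>i\<in>Vp - {l}. 1 / N)"
    using P N by (intro mult_left_mono sum_mono) auto
  also have "\<dots> = real (card Vp) - 1" using N by (simp add: card_partially_stubborn_noncenter)
  finally have "0 \<le> \<xi>" using card_fully_partially_stubborn by (simp add: \<xi>_def N_def flip: of_nat_add)
  moreover have "\<xi> < N" using xi_less[of x] x_partial P by (simp add: xi N_def)
  ultimately have X: "X + power_flow (\<theta>$l) X = \<xi> / N" "0 \<le> X" "X \<le> 1"
    using powval_balance[of "\<theta>$l" N \<xi>] center_pos \<theta>_range N by (auto simp: X_def)
  have partial_balance: "\<forall>i\<in>Vp - {l}. x$i + power_flow (\<theta>$i) (x$i) = 1 / real CARD('n)"
    using P by (simp add: x_partial N_def)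
  have "power_balance \<theta> C x"
    unfolding power_balance_star_iff
  proof (intro conjI allI impI)
    show "x$l + power_flow (\<theta>$l) (x$l) = 1 / real CARD('n) + (\<Sum>i\<in>UNIV - {l}. power_flow (\<theta>$i) (x$i))"
    proof -
      have "x$l + power_flow (\<theta>$l) (x$l) = \<xi> / N" using X by (simp add: x_def)
      also have "\<dots> = 1 / real CARD('n) + (\<Sum>i\<in>UNIV - {l}. power_flow (\<theta>$i) (x$i))"
        using noncenter_flow_sum[OF partial_balance] by (simp add: xi N_def)
      finally show ?thesis .
    qed
    fix j assume "j \<noteq> l"
    then show "x$j + power_flow (\<theta>$j) (x$j) = 1 / real CARD('n) + C$l$j * power_flow (\<theta>$l) (x$l)"
      using partial_balance unlinked \<theta>_range[rule_format, of j] by (auto simp: x_def N_def order.order_iff_strict)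
  qed
  moreover have "0 \<le> x$i" for i
    using X P N C_nonneg[of l i] power_flow_nonneg[of "\<theta>$l" X] center_pos \<theta>_range
    by (auto simp: x_def)
  ultimately have "equilibrium_A \<theta> C x"
    by (simp add: equilibrium_A_iff_power_balance[OF stochastic \<theta>_range])
  then show ?thesis ..
qed

lemma unique_equilibrium:
  "\<exists>x. equilibrium_A \<theta> C x \<and> (\<exists>V. equilibrium_B \<theta> C V x)
     \<and> (\<forall>y. (equilibrium_A \<theta> C y \<or> (\<exists>V. equilibrium_B \<theta> C V y)) \<longrightarrow> y = x)
     \<and> (let r = real (card Vf);
            \<xi> = real CARD('n) - r - real CARD('n) * (\<Sum>j\<in>Vp - {l}. x$j)
        in (\<forall>i\<in>Vp - {l}. x$i = powval (real CARD('n)) 1 (\<theta>$i))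
         \<and> x$l = powval (real CARD('n)) \<xi> (\<theta>$l)
         \<and> (\<forall>i\<in>Vf. x$i = 1 / real CARD('n) + (\<xi> / real CARD('n) - x$l) * C$l$i))"
proof -
  obtain x where x: "equilibrium_A \<theta> C x" using equilibrium_exists ..
  show ?thesis
  proof (rule exI, intro conjI)
    show "equilibrium_A \<theta> C x" by (fact x)
    show "\<exists>V. equilibrium_B \<theta> C V x" by (rule equilibrium_A_imp_B[OF stochastic \<theta>_range x])
    show "\<forall>y. (equilibrium_A \<theta> C y \<or> (\<exists>V. equilibrium_B \<theta> C V y)) \<longrightarrow> y = x"
      using equilibrium_B_imp_A[OF stochastic \<theta>_range] equilibrium_unique[OF _ x] by blast
    show "let r = real (card Vf); \<xi> = real CARD('n) - r - real CARD('n) * (\<Sum>j\<in>Vp - {l}. x$j)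
      in (\<forall>i\<in>Vp - {l}. x$i = powval (real CARD('n)) 1 (\<theta>$i))
       \<and> x$l = powval (real CARD('n)) \<xi> (\<theta>$l)
       \<and> (\<forall>i\<in>Vf. x$i = 1 / real CARD('n) + (\<xi> / real CARD('n) - x$l) * C$l$i)"
      unfolding Let_def xi_def[symmetric]
      using equilibrium_properties[OF x] unlinked equilibrium_center[OF x] equilibrium_fully_stubborn_xi[OF x]
      by blast
  qed
qed

end

end

theorem theorem3:
  fixes \<theta> :: "real^'n" and C :: "real^'n^'n" and l :: 'n
  defines "n \<equiv> real CARD('n)"
  defines "Vf \<equiv> {i. \<theta>$i = 0}"
  defines "Vp \<equiv> {i. \<theta>$i > 0}"
  assumes n2: "CARD('n) \<ge> 2"
    and C_stoch: "row_stochastic C"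
    and C_diag: "\<forall>i. C$i$i = 0"
    and theta_range: "\<forall>i. 0 \<le> \<theta>$i \<and> \<theta>$i < 1"
    and theta_pos: "\<exists>j. \<theta>$j > 0"
    and star: "star_topology C l"
    and theta_l: "0 < \<theta>$l \<and> \<theta>$l < 1"
  shows
    "(\<forall>x. (equilibrium_A \<theta> C x \<or> (\<exists>V. equilibrium_B \<theta> C V x)) \<longrightarrow>
        int_prob_simplex x
      \<and> (\<forall>i\<in>Vf. (C$l$i = 0 \<longrightarrow> x$i = 1 / n) \<and> (C$l$i \<noteq> 0 \<longrightarrow> x$i > 1 / n))
      \<and> (\<forall>i\<in>Vp - {l}. C$l$i = 0 \<longrightarrow> x$i = powval n 1 (\<theta>$i)))
   \<and> (\<forall>a b. 0 < a \<and> a < b \<and> b < 1 \<longrightarrow> powval n 1 b < powval n 1 a)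
   \<and> ((\<forall>i\<in>Vp - {l}. C$l$i = 0) \<longrightarrow>
       (\<exists>x. equilibrium_A \<theta> C x \<and> (\<exists>V. equilibrium_B \<theta> C V x)
          \<and> (\<forall>y. (equilibrium_A \<theta> C y \<or> (\<exists>V. equilibrium_B \<theta> C V y)) \<longrightarrow> y = x)
          \<and> (let r = real (card Vf);
                 \<xi> = n - r - n * (\<Sum>j\<in>Vp - {l}. x$j)
             in (\<forall>i\<in>Vp - {l}. x$i = powval n 1 (\<theta>$i))
              \<and> x$l = powval n \<xi> (\<theta>$l)
              \<and> (\<forall>i\<in>Vf. x$i = 1 / n + (\<xi> / n - x$l) * C$l$i))))"
proof -
  \<comment> \<open>theta_pos is implied by theta_l.\<close>
  interpret S: star_network \<theta> C l
    using n2 C_stoch C_diag theta_range star theta_l by unfold_locales auto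
  have "2 \<le> n" using n2 by (simp add: n_def)
  then show ?thesis
    unfolding n_def Vf_def Vp_def
    using S.equilibrium_properties equilibrium_B_imp_A[OF C_stoch theta_range]
      powval_strict_antimono S.unique_equilibrium
    by blast
qed

end
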